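(* Let $G$ be a cubic bipartite graph with $2k$ vertices and a proper 3-edge-coloring. Then the number of faces of the faithful embedding of $G$ relative to the 3-coloring has the same parity as $k$. Consequently, if $M$ is an orientable map, then $\chi(M)$ is even.
   Context: A proper 3-edge-coloring (colors $a,b,c$) of a cubic graph gives the $ab$-, $bc$-, $ca$-polygons (cycles of edges of two colors); the faithful embedding is obtained by attaching a disc along each such polygon, so its faces correspond to these polygons. A map is a triple $M=(C_M,v_M,f_M)$ where $C_M$ is a finite cubic graph and $v_M,f_M$ are disjoint perfect matchings whose union is a disjoint union of 4-cycles (squares, set $SQ(M)$); $a_M$ is the third perfect matching; $\chi(M)=|vG(M)|-|SQ(M)|+|fG(M)|$ where $vG(M)$, $fG(M)$ are the sets of cycles of $v_M\cup a_M$ and $f_M\cup a_M$. $M$ is orientable if $C_M$ is bipartite. *)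

theory Defs
  imports Main
begin

text \<open>Finite loopless multigraphs: vertex set V, edge set E, and an endpoint map
  ends assigning to each edge its two-element set of end vertices (parallel edges allowed).\<close>

definition cubic_graph :: "'v set \<Rightarrow> 'e set \<Rightarrow> ('e \<Rightarrow> 'v set) \<Rightarrow> bool" where
  "cubic_graph V E ends \<longleftrightarrow> finite V \<and> finite E \<and>
     (\<forall>e\<in>E. ends e \<subseteq> V \<and> card (ends e) = 2) \<and>
     (\<forall>x\<in>V. card {e\<in>E. x \<in> ends e} = 3)"

definition bipartite :: "'v set \<Rightarrow> 'e set \<Rightarrow> ('e \<Rightarrow> 'v set) \<Rightarrow> bool" where
  "bipartite V E ends \<longleftrightarrow> (\<exists>A\<subseteq>V. \<forall>e\<in>E. card (ends e \<inter> A) = 1)"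

text \<open>Proper 3-edge-colouring with colours a, b, c encoded as 0, 1, 2.\<close>
definition proper_3_edge_coloring ::
    "'v set \<Rightarrow> 'e set \<Rightarrow> ('e \<Rightarrow> 'v set) \<Rightarrow> ('e \<Rightarrow> nat) \<Rightarrow> bool" where
  "proper_3_edge_coloring V E ends col \<longleftrightarrow> (\<forall>e\<in>E. col e \<in> {0,1,2}) \<and>
     (\<forall>x\<in>V. \<forall>e\<in>E. \<forall>e'\<in>E. x \<in> ends e \<and> x \<in> ends e' \<and> e \<noteq> e' \<longrightarrow> col e \<noteq> col e')"

definition perfect_matching :: "'v set \<Rightarrow> 'e set \<Rightarrow> ('e \<Rightarrow> 'v set) \<Rightarrow> 'e set \<Rightarrow> bool" where
  "perfect_matching V E ends M \<longleftrightarrow> M \<subseteq> E \<and> (\<forall>x\<in>V. card {e\<in>M. x \<in> ends e} = 1)"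

definition adj_rel :: "('e \<Rightarrow> 'v set) \<Rightarrow> 'e set \<Rightarrow> ('v \<times> 'v) set" where
  "adj_rel ends F = {(x, y). \<exists>e\<in>F. ends e = {x, y}}"

definition component :: "('e \<Rightarrow> 'v set) \<Rightarrow> 'e set \<Rightarrow> 'v \<Rightarrow> 'v set" where
  "component ends F x = {y. (x, y) \<in> (adj_rel ends F)\<^sup>*}"

definition num_components :: "'v set \<Rightarrow> ('e \<Rightarrow> 'v set) \<Rightarrow> 'e set \<Rightarrow> nat" where
  "num_components V ends F = card (component ends F ` V)"

text \<open>Number of faces of the faithful embedding = number of ab-, bc- and ca-polygons,
  i.e. cycles (components) of the two-coloured spanning subgraphs.\<close>
definition faithful_faces :: "'v set \<Rightarrow> 'e set \<Rightarrow> ('e \<Rightarrow> 'v set) \<Rightarrow> ('e \<Rightarrow> nat) \<Rightarrow> nat" where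
  "faithful_faces V E ends col =
     num_components V ends {e\<in>E. col e \<in> {0,1}} +
     num_components V ends {e\<in>E. col e \<in> {1,2}} +
     num_components V ends {e\<in>E. col e \<in> {2,0}}"

definition a_match :: "'e set \<Rightarrow> 'e set \<Rightarrow> 'e set \<Rightarrow> 'e set" where
  "a_match E v f = E - (v \<union> f)"

definition is_map :: "'v set \<Rightarrow> 'e set \<Rightarrow> ('e \<Rightarrow> 'v set) \<Rightarrow> 'e set \<Rightarrow> 'e set \<Rightarrow> bool" where
  "is_map V E ends v f \<longleftrightarrow> cubic_graph V E ends \<and>
     perfect_matching V E ends v \<and> perfect_matching V E ends f \<and> v \<inter> f = {} \<and>
     (\<forall>x\<in>V. card (component ends (v \<union> f) x) = 4) \<and>
     perfect_matching V E ends (a_match E v f)"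

definition map_orientable :: "'v set \<Rightarrow> 'e set \<Rightarrow> ('e \<Rightarrow> 'v set) \<Rightarrow> 'e set \<Rightarrow> 'e set \<Rightarrow> bool" where
  "map_orientable V E ends v f \<longleftrightarrow> bipartite V E ends"

definition euler_char :: "'v set \<Rightarrow> 'e set \<Rightarrow> ('e \<Rightarrow> 'v set) \<Rightarrow> 'e set \<Rightarrow> 'e set \<Rightarrow> int" where
  "euler_char V E ends v f =
     int (num_components V ends (v \<union> a_match E v f))
     - int (num_components V ends (v \<union> f))
     + int (num_components V ends (f \<union> a_match E v f))"

end

theory Submission
  imports Defs "HOL-Combinatorics.Permutations"
begin

text \<open>
  Let A be one side of the bipartition and let m_c x be the neighbour of x along its edge of
  color c. For colors i, j the map m_j o m_i preserves A, and its cycles on A are the traces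
  on A of the ij-polygons, which alternate between A and its complement. On A we have
  (m_i m_k)(m_k m_j)(m_j m_i) = id, so the signs of these three permutations multiply to 1.
  A permutation of A with c cycles has sign (-1)^(|A| - c) (composing p with the
  transposition of x and p x splits x off its cycle), hence the number of faces is congruent
  to 3|A| = 3k modulo 2. For an orientable map the squares partition the vertices into
  blocks of four, so k = 2|SQ| is even; thus the number of faces is even, and so is
  chi = faces - 2|SQ|.
\<close>

section \<open>Connected classes under a retraction\<close>

lemma rtrancl_Image_eq_if_sym:
  assumes "sym R" and "(a, b) \<in> R\<^sup>*"
  shows "R\<^sup>* `` {a} = R\<^sup>* `` {b}"
proof -
  have "(b, a) \<in> R\<^sup>*" using sym_rtrancl[OF assms(1)] assms(2) by (rule symD)
  then show ?thesis using assms(2) by (auto intro: rtrancl_trans)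
qed

lemma rtrancl_Image_retract:
  assumes QR: "Q \<subseteq> R\<^sup>*" and QA: "Q \<subseteq> A \<times> A"
    and fixed: "\<forall>a\<in>A. \<rho> a = a" and step: "\<forall>(w, u)\<in>R. (\<rho> w, \<rho> u) \<in> Q\<^sup>*"
    and a: "a \<in> A"
  shows "R\<^sup>* `` {a} \<inter> A = Q\<^sup>* `` {a}"
proof (intro equalityI subsetI)
  fix z assume "z \<in> R\<^sup>* `` {a} \<inter> A"
  then have "(a, z) \<in> R\<^sup>*" and "z \<in> A" by auto
  from this(1) have "(\<rho> a, \<rho> z) \<in> Q\<^sup>*"
    by (induction rule: rtrancl_induct) (use step in \<open>auto intro: rtrancl_trans\<close>)
  then show "z \<in> Q\<^sup>* `` {a}" using fixed a \<open>z \<in> A\<close> by simp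
next
  fix z assume "z \<in> Q\<^sup>* `` {a}"
  then have "(a, z) \<in> Q\<^sup>*" by simp
  moreover from this have "z \<in> A"
    by (induction rule: rtrancl_induct) (use a QA in auto)
  ultimately show "z \<in> R\<^sup>* `` {a} \<inter> A" using rtrancl_subset_rtrancl[OF QR] by auto
qed

lemma card_rtrancl_classes_retract:
  assumes symR: "sym R" and QR: "Q \<subseteq> R\<^sup>*" and QA: "Q \<subseteq> A \<times> A" and AV: "A \<subseteq> V"
    and fixed: "\<forall>a\<in>A. \<rho> a = a" and step: "\<forall>(w, u)\<in>R. (\<rho> w, \<rho> u) \<in> Q\<^sup>*"
    and retract: "\<forall>v\<in>V. \<rho> v \<in> A \<and> (v, \<rho> v) \<in> R\<^sup>*"
  shows "card ((\<lambda>v. R\<^sup>* `` {v}) ` V) = card ((\<lambda>a. Q\<^sup>* `` {a}) ` A)"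
proof -
  have classes: "(\<lambda>v. R\<^sup>* `` {v}) ` V = (\<lambda>a. R\<^sup>* `` {a}) ` A"
  proof
    show "(\<lambda>v. R\<^sup>* `` {v}) ` V \<subseteq> (\<lambda>a. R\<^sup>* `` {a}) ` A"
      using retract rtrancl_Image_eq_if_sym[OF symR] by blast
  qed (use AV in blast)
  have "inj_on (\<lambda>C. C \<inter> A) ((\<lambda>a. R\<^sup>* `` {a}) ` A)"
  proof (rule inj_onI, clarify)
    fix a b assume "a \<in> A" "b \<in> A" "R\<^sup>* `` {a} \<inter> A = R\<^sup>* `` {b} \<inter> A"
    then have "(b, a) \<in> R\<^sup>*" by blast
    then show "R\<^sup>* `` {a} = R\<^sup>* `` {b}" using rtrancl_Image_eq_if_sym[OF symR] by metis
  qed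
  moreover have "(\<lambda>C. C \<inter> A) ` (\<lambda>a. R\<^sup>* `` {a}) ` A = (\<lambda>a. Q\<^sup>* `` {a}) ` A"
    using rtrancl_Image_retract[OF QR QA fixed step] by (simp add: image_image)
  ultimately show ?thesis unfolding classes by (metis card_image)
qed

section \<open>Cycle count and sign of a permutation\<close>

text \<open>The cycles of p on S are the connected components of the graph with edges {x, p x}.\<close>

definition perm_edges :: "('a \<Rightarrow> 'a) \<Rightarrow> 'a set \<Rightarrow> 'a rel" where
  "perm_edges p S = {(x, p x) | x. x \<in> S} \<union> {(p x, x) | x. x \<in> S}"

definition cycle_count :: "('a \<Rightarrow> 'a) \<Rightarrow> 'a set \<Rightarrow> nat" where
  "cycle_count p S = card ((\<lambda>x. (perm_edges p S)\<^sup>* `` {x}) ` S)"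

lemma sym_perm_edges: "sym (perm_edges p S)"
  unfolding perm_edges_def sym_def by blast

lemma perm_edges_subset: "p ` S \<subseteq> S \<Longrightarrow> perm_edges p S \<subseteq> S \<times> S"
  unfolding perm_edges_def by blast

lemma perm_edges_map_rtrancl:
  assumes "sym Q" and "\<And>x. x \<in> S \<Longrightarrow> (\<rho> x, \<rho> (p x)) \<in> Q\<^sup>*"
  shows "\<forall>(w, u)\<in>perm_edges p S. (\<rho> w, \<rho> u) \<in> Q\<^sup>*"
  using assms sym_rtrancl[OF assms(1)] unfolding perm_edges_def by (auto dest: symD)

lemma perm_edges_subset_rtrancl:
  assumes "sym R" and "\<And>x. x \<in> S \<Longrightarrow> (x, p x) \<in> R\<^sup>*"
  shows "perm_edges p S \<subseteq> R\<^sup>*"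
  using perm_edges_map_rtrancl[where \<rho> = "\<lambda>x. x", OF assms] by auto

lemma cycle_count_le: "finite S \<Longrightarrow> cycle_count p S \<le> card S"
  unfolding cycle_count_def by (rule card_image_le)

lemma cycle_count_insert_fixpoint:
  assumes "finite S" and "a \<notin> S" and "p a = a" and "p ` S \<subseteq> S"
  shows "cycle_count p (insert a S) = Suc (cycle_count p S)"
proof -
  let ?R = "perm_edges p S"
  have "perm_edges p (insert a S) = insert (a, a) ?R"
    using assms(3) unfolding perm_edges_def by auto
  moreover have "(insert (a, a) ?R)\<^sup>* = ?R\<^sup>*"
    by (rule rtrancl_subset) auto
  ultimately have edges: "(perm_edges p (insert a S))\<^sup>* = ?R\<^sup>*" by simp
  have "a \<notin> Domain ?R"
    using perm_edges_subset[OF assms(4)] assms(2) by auto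
  then have a_class: "?R\<^sup>* `` {a} = {a}"
    using Not_Domain_rtrancl[of a ?R] by auto
  have "a \<notin> ?R\<^sup>* `` {x}" if "x \<in> S" for x
  proof
    assume "a \<in> ?R\<^sup>* `` {x}"
    then have "x \<in> ?R\<^sup>* `` {a}"
      using symD[OF sym_rtrancl[OF sym_perm_edges]] by simp
    then show False using a_class that assms(2) by simp
  qed
  with a_class have "(\<lambda>x. ?R\<^sup>* `` {x}) ` insert a S = insert {a} ((\<lambda>x. ?R\<^sup>* `` {x}) ` S)"
    and "{a} \<notin> (\<lambda>x. ?R\<^sup>* `` {x}) ` S"
    by auto
  then show ?thesis
    unfolding cycle_count_def edges using assms(1) by simp
qed

lemma cycle_count_id: "finite S \<Longrightarrow> cycle_count id S = card S"
proof (induction rule: finite_induct)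
  case empty
  then show ?case by (simp add: cycle_count_def)
next
  case (insert a S)
  then show ?case by (simp add: cycle_count_insert_fixpoint)
qed

lemma cycle_count_transpose_comp:
  assumes fin: "finite S" and p: "p permutes S" and x: "x \<in> S" and px_x: "p x \<noteq> x"
  shows "cycle_count (transpose x (p x) \<circ> p) S = Suc (cycle_count p S)"
proof -
  txt \<open>q fixes x and otherwise follows p, skipping x; \<rho> contracts x onto p x.\<close>
  define q where "q = transpose x (p x) \<circ> p"
  define \<rho> where "\<rho> y = (if y = x then p x else y)" for y
  let ?S' = "S - {x}"
  have px: "p x \<in> S" using p x by (simp add: permutes_in_image)
  have q_x: "q x = x" unfolding q_def by simp
  have q_y: "q y = (if p y = x then p x else p y)" if "y \<noteq> x" for y
    using that permutes_inj[OF p] unfolding q_def by (auto simp: transpose_def dest: injD)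
  have q_S': "q y \<in> ?S'" if "y \<in> ?S'" for y
    using that q_y[of y] px_x px p by (auto simp: permutes_in_image)
  have "cycle_count p S = cycle_count q ?S'"
    unfolding cycle_count_def
  proof (rule card_rtrancl_classes_retract)
    show "perm_edges q ?S' \<subseteq> (perm_edges p S)\<^sup>*"
    proof (rule perm_edges_subset_rtrancl[OF sym_perm_edges])
      fix y assume y: "y \<in> ?S'"
      have "(z, p z) \<in> perm_edges p S" if "z \<in> S" for z
        using that unfolding perm_edges_def by blast
      then show "(y, q y) \<in> (perm_edges p S)\<^sup>*"
        using y x q_y[of y] by (cases "p y = x") (auto intro: rtrancl_into_rtrancl)
    qed
    show "\<forall>(w, u)\<in>perm_edges p S. (\<rho> w, \<rho> u) \<in> (perm_edges q ?S')\<^sup>*"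
    proof (rule perm_edges_map_rtrancl[OF sym_perm_edges])
      fix y assume "y \<in> S"
      then show "(\<rho> y, \<rho> (p y)) \<in> (perm_edges q ?S')\<^sup>*"
        using q_y[of y] px_x unfolding \<rho>_def perm_edges_def by auto
    qed
    show "\<forall>v\<in>S. \<rho> v \<in> ?S' \<and> (v, \<rho> v) \<in> (perm_edges p S)\<^sup>*"
      using px px_x x unfolding \<rho>_def perm_edges_def by auto
    show "perm_edges q ?S' \<subseteq> ?S' \<times> ?S'"
      using q_S' by (intro perm_edges_subset) blast
  qed (auto simp: sym_perm_edges \<rho>_def)
  moreover have "cycle_count q (insert x ?S') = Suc (cycle_count q ?S')"
    using fin q_x q_S' by (intro cycle_count_insert_fixpoint) auto
  then have "cycle_count q S = Suc (cycle_count q ?S')"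
    using x by (simp add: insert_absorb)
  ultimately show ?thesis unfolding q_def by simp
qed

lemma evenperm_iff_cycle_count:
  assumes fin: "finite S" and "p permutes S"
  shows "evenperm p \<longleftrightarrow> even (card S - cycle_count p S)"
  using assms(2)
proof (induction "card {x\<in>S. p x \<noteq> x}" arbitrary: p rule: less_induct)
  case less
  note p = less.prems
  show ?case
  proof (cases "\<exists>x\<in>S. p x \<noteq> x")
    case False
    then have "p = id" using permutes_not_in[OF p] by (metis eq_id_iff)
    then show ?thesis by (simp add: cycle_count_id[OF fin])
  next
    case True
    then obtain x where x: "x \<in> S" "p x \<noteq> x" by blast
    define q where "q = transpose x (p x) \<circ> p"
    have px: "p x \<in> S" using p x by (simp add: permutes_in_image)
    have q_perm: "q permutes S"
      unfolding q_def by (rule permutes_compose[OF p permutes_swap_id[OF x(1) px]])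
    have "{y\<in>S. q y \<noteq> y} \<subseteq> {y\<in>S. p y \<noteq> y} - {x}"
    proof
      fix y assume y: "y \<in> {y\<in>S. q y \<noteq> y}"
      have "q x = x" unfolding q_def by simp
      moreover have "q y = y" if "p y = y"
        using that x(2) permutes_inj[OF p] unfolding q_def
        by (metis comp_apply injD transpose_apply_other)
      ultimately show "y \<in> {y\<in>S. p y \<noteq> y} - {x}" using y by auto
    qed
    have "card {y\<in>S. q y \<noteq> y} < card {y\<in>S. p y \<noteq> y}"
    proof (rule le_less_trans)
      show "card {y\<in>S. q y \<noteq> y} \<le> card ({y\<in>S. p y \<noteq> y} - {x})"
        using \<open>{y\<in>S. q y \<noteq> y} \<subseteq> _\<close> fin by (intro card_mono) auto
      show "card ({y\<in>S. p y \<noteq> y} - {x}) < card {y\<in>S. p y \<noteq> y}"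
        using fin x by (intro card_Diff1_less) auto
    qed
    then have IH: "evenperm q \<longleftrightarrow> even (card S - cycle_count q S)"
      using less.hyps q_perm by blast
    have "evenperm q \<longleftrightarrow> \<not> evenperm p"
      unfolding q_def
      using evenperm_comp[OF permutes_imp_permutation[OF fin permutes_swap_id[OF x(1) px]]
          permutes_imp_permutation[OF fin p]] x(2)
      by (simp add: evenperm_swap)
    moreover have "cycle_count q S = Suc (cycle_count p S)"
      unfolding q_def using fin p x by (rule cycle_count_transpose_comp)
    moreover have "cycle_count q S \<le> card S" using fin by (rule cycle_count_le)
    ultimately show ?thesis using IH by (simp; blast)
  qed
qed

lemma cycle_count_parity_of_comp_eq_id:
  assumes fin: "finite S" and perms: "p permutes S" "q permutes S" "r permutes S"
    and id: "r \<circ> q \<circ> p = id"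
  shows "even (cycle_count p S + cycle_count q S + cycle_count r S) \<longleftrightarrow> even (card S)"
proof -
  have "permutation p" "permutation q" "permutation r"
    using perms permutes_imp_permutation[OF fin] by auto
  then have "evenperm r = (evenperm q = evenperm p)"
    using id evenperm_comp by (metis evenperm_id permutation_compose)
  moreover have "evenperm \<sigma> \<longleftrightarrow> (even (card S) \<longleftrightarrow> even (cycle_count \<sigma> S))"
    if "\<sigma> permutes S" for \<sigma>
    using evenperm_iff_cycle_count[OF fin that] cycle_count_le[OF fin, of \<sigma>]
    by (simp add: not_less[symmetric])
  ultimately show ?thesis using perms by auto
qed

section \<open>Polygons of a bipartite cubic graph\<close>

lemma sym_adj_rel: "sym (adj_rel ends F)"
  unfolding adj_rel_def sym_def by (auto simp: insert_commute)

lemma component_eq_Image: "component ends F x = (adj_rel ends F)\<^sup>* `` {x}"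
  unfolding component_def by (simp add: Image_singleton)

locale bipartite_edge_colored_cubic =
  fixes V :: "'v set" and E :: "'e set" and ends :: "'e \<Rightarrow> 'v set" and col :: "'e \<Rightarrow> nat"
    and A :: "'v set"
  assumes cubic: "cubic_graph V E ends"
    and proper: "proper_3_edge_coloring V E ends col"
    and A_subset: "A \<subseteq> V"
    and A_side: "\<forall>e\<in>E. card (ends e \<inter> A) = 1"
begin

lemma finite_V: "finite V"
  using cubic unfolding cubic_graph_def by blast

lemma finite_A: "finite A"
  using finite_V A_subset by (rule finite_subset[rotated])

lemma ends_subset: "e \<in> E \<Longrightarrow> ends e \<subseteq> V"
  using cubic unfolding cubic_graph_def by blast

lemma color_range: "e \<in> E \<Longrightarrow> col e \<in> {0,1,2}"
  using proper unfolding proper_3_edge_coloring_def by blast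

lemma edge_color_unique:
  "x \<in> V \<Longrightarrow> e \<in> E \<Longrightarrow> e' \<in> E \<Longrightarrow> x \<in> ends e \<Longrightarrow> x \<in> ends e' \<Longrightarrow> col e = col e' \<Longrightarrow> e = e'"
  using proper unfolding proper_3_edge_coloring_def by blast

lemma edge_of_color:
  assumes x: "x \<in> V" and c: "c \<in> {0,1,2}"
  shows "\<exists>e\<in>E. x \<in> ends e \<and> col e = c"
proof -
  let ?X = "{e\<in>E. x \<in> ends e}"
  have "inj_on col ?X"
    using edge_color_unique[OF x] by (auto intro: inj_onI)
  then have "card (col ` ?X) = 3"
    using cubic x unfolding cubic_graph_def by (simp add: card_image)
  moreover have "col ` ?X \<subseteq> {0,1,2}"
    using color_range by (metis (no_types, lifting) image_subsetI mem_Collect_eq)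
  ultimately have "col ` ?X = {0,1,2}"
    by (intro card_subset_eq) simp_all
  with c have "c \<in> col ` ?X" by simp
  then show ?thesis by blast
qed

definition mate :: "nat \<Rightarrow> 'v \<Rightarrow> 'v" where
  "mate c x = (THE y. \<exists>e\<in>E. col e = c \<and> ends e = {x, y})"

lemma mate_eqI:
  assumes x: "x \<in> V" and e: "e \<in> E" "col e = c" "ends e = {x, y}"
  shows "mate c x = y"
  unfolding mate_def
proof (rule the_equality)
  fix y' assume "\<exists>e\<in>E. col e = c \<and> ends e = {x, y'}"
  then obtain e' where e': "e' \<in> E" "col e' = c" "ends e' = {x, y'}" by blast
  then have "e' = e"
    using edge_color_unique[OF x] e by simp
  then show "y' = y" using e e' by (metis doubleton_eq_iff)
qed (use e in blast)

lemma mate_edge: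
  assumes "x \<in> V" and "c \<in> {0,1,2}"
  shows "\<exists>e\<in>E. col e = c \<and> ends e = {x, mate c x} \<and> mate c x \<noteq> x"
proof -
  obtain e where e: "e \<in> E" "x \<in> ends e" "col e = c" using edge_of_color[OF assms] by blast
  moreover have "card (ends e) = 2" using cubic e(1) unfolding cubic_graph_def by blast
  then obtain a b where "ends e = {a, b}" "a \<noteq> b" by (auto simp: card_2_iff)
  with e(2) obtain y where "ends e = {x, y}" "y \<noteq> x" by auto
  with e show ?thesis using mate_eqI[OF assms(1) e(1,3)] by auto
qed

context
  fixes x :: 'v and c :: nat
  assumes x: "x \<in> V" and c: "c \<in> {0,1,2}"
begin

lemma mate_in_V: "mate c x \<in> V"
  using mate_edge[OF x c] ends_subset by blast

lemma mate_mate: "mate c (mate c x) = x"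
proof -
  obtain e where "e \<in> E" "col e = c" "ends e = {mate c x, x}"
    using mate_edge[OF x c] by (auto simp: insert_commute)
  then show ?thesis using mate_eqI[OF mate_in_V] by blast
qed

lemma mate_in_A_iff: "mate c x \<in> A \<longleftrightarrow> x \<notin> A"
proof -
  obtain e where "e \<in> E" "ends e = {x, mate c x}" "mate c x \<noteq> x"
    using mate_edge[OF x c] by blast
  moreover from this have "card ({x, mate c x} \<inter> A) = 1" using A_side by metis
  ultimately show ?thesis
    by (cases "x \<in> A"; cases "mate c x \<in> A") (auto simp: Int_insert_left)
qed

end

lemma card_V: "card V = 2 * card A"
proof -
  have "bij_betw (mate 0) A (V - A)"
  proof (rule bij_betw_byWitness[where f' = "mate 0"])
    show "\<forall>a\<in>A. mate 0 (mate 0 a) = a" "\<forall>a\<in>V - A. mate 0 (mate 0 a) = a"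
      using A_subset mate_mate by auto
    show "mate 0 ` A \<subseteq> V - A" "mate 0 ` (V - A) \<subseteq> A"
      using A_subset mate_in_A_iff mate_in_V by auto
  qed
  then have "card A = card (V - A)" by (rule bij_betw_same_card)
  also have "\<dots> = card V - card A" using finite_A A_subset by (rule card_Diff_subset)
  finally show ?thesis using card_mono[OF finite_V A_subset] by linarith
qed

lemma adj_rel_color_pair:
  assumes "i \<in> {0,1,2}" and "j \<in> {0,1,2}"
  shows "(x, y) \<in> adj_rel ends {e\<in>E. col e \<in> {i, j}} \<longleftrightarrow>
    x \<in> V \<and> (y = mate i x \<or> y = mate j x)"
proof
  assume "(x, y) \<in> adj_rel ends {e\<in>E. col e \<in> {i, j}}"
  then obtain e where e: "e \<in> E" "col e \<in> {i, j}" "ends e = {x, y}"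
    unfolding adj_rel_def by blast
  then have "x \<in> V" using ends_subset by blast
  with e show "x \<in> V \<and> (y = mate i x \<or> y = mate j x)" using mate_eqI by blast
next
  assume "x \<in> V \<and> (y = mate i x \<or> y = mate j x)"
  then show "(x, y) \<in> adj_rel ends {e\<in>E. col e \<in> {i, j}}"
    using mate_edge[of x i] mate_edge[of x j] assms unfolding adj_rel_def by fastforce
qed

definition walk_perm :: "nat \<Rightarrow> nat \<Rightarrow> 'v \<Rightarrow> 'v" where
  "walk_perm i j x = (if x \<in> A then mate j (mate i x) else x)"

lemma walk_perm_in_A:
  assumes "i \<in> {0,1,2}" "j \<in> {0,1,2}" "x \<in> A"
  shows "walk_perm i j x \<in> A"
  using assms A_subset mate_in_A_iff[OF _ assms(1)] mate_in_A_iff[OF mate_in_V assms(2)]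
  unfolding walk_perm_def by auto

lemma walk_perm_mate:
  assumes "i \<in> {0,1,2}" "x \<in> V" "x \<notin> A"
  shows "walk_perm i j (mate i x) = mate j x"
  using assms mate_in_A_iff mate_mate unfolding walk_perm_def by auto

lemma walk_perm_trans:
  assumes "i \<in> {0,1,2}" "j \<in> {0,1,2}" "k \<in> {0,1,2}"
  shows "walk_perm j k (walk_perm i j x) = walk_perm i k x"
  using assms walk_perm_in_A A_subset mate_in_V mate_mate unfolding walk_perm_def by auto

lemma walk_perm_self: "i \<in> {0,1,2} \<Longrightarrow> walk_perm i i x = x"
  using A_subset mate_mate unfolding walk_perm_def by auto

lemma walk_perm_permutes:
  assumes "i \<in> {0,1,2}" "j \<in> {0,1,2}"
  shows "walk_perm i j permutes A"
proof (rule bij_imp_permutes)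
  show "bij_betw (walk_perm i j) A A"
    by (rule bij_betw_byWitness[where f' = "walk_perm j i"])
      (use assms walk_perm_trans walk_perm_self walk_perm_in_A in auto)
qed (simp add: walk_perm_def)

lemma walk_perm_triangle:
  assumes "i \<in> {0,1,2}" "j \<in> {0,1,2}" "k \<in> {0,1,2}"
  shows "walk_perm k i \<circ> walk_perm j k \<circ> walk_perm i j = id"
  using assms by (simp add: fun_eq_iff walk_perm_trans walk_perm_self)

definition proj_A :: "nat \<Rightarrow> 'v \<Rightarrow> 'v" where
  "proj_A i w = (if w \<in> A then w else mate i w)"

lemma proj_A_adj:
  assumes i: "i \<in> {0,1,2}" and j: "j \<in> {0,1,2}"
    and "(w, u) \<in> adj_rel ends {e\<in>E. col e \<in> {i, j}}"
  shows "(proj_A i w, proj_A i u) \<in> (perm_edges (walk_perm i j) A)\<^sup>*"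
proof -
  let ?Q = "perm_edges (walk_perm i j) A"
  have w: "w \<in> V" and "u = mate i w \<or> u = mate j w"
    using assms adj_rel_color_pair by auto
  have j_step: "(proj_A i v, proj_A i (mate j v)) \<in> ?Q" if "v \<in> V" "v \<notin> A" for v
    using that walk_perm_mate[OF i that] mate_in_A_iff i j unfolding proj_A_def perm_edges_def
    by auto
  consider "u = mate i w" | "u = mate j w" "w \<notin> A" | "u = mate j w" "w \<in> A"
    using \<open>u = mate i w \<or> u = mate j w\<close> by blast
  then show ?thesis
  proof cases
    case 1
    then have "proj_A i u = proj_A i w"
      using mate_in_A_iff[OF w i] mate_mate[OF w i] unfolding proj_A_def by auto
    then show ?thesis by simp
  next
    case 2
    then show ?thesis using j_step w by auto
  next
    case 3
    then have "(proj_A i u, proj_A i w) \<in> ?Q"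
      using j_step[of u] mate_in_V[OF w j] mate_in_A_iff[OF w j] mate_mate[OF w j] by auto
    then have "(proj_A i w, proj_A i u) \<in> ?Q" by (rule symD[OF sym_perm_edges])
    then show ?thesis by simp
  qed
qed

lemma num_components_color_pair:
  assumes i: "i \<in> {0,1,2}" and j: "j \<in> {0,1,2}"
  shows "num_components V ends {e\<in>E. col e \<in> {i, j}} = cycle_count (walk_perm i j) A"
proof -
  let ?R = "adj_rel ends {e\<in>E. col e \<in> {i, j}}"
  let ?Q = "perm_edges (walk_perm i j) A"
  note adj = adj_rel_color_pair[OF i j]
  have "?Q \<subseteq> ?R\<^sup>*"
  proof (rule perm_edges_subset_rtrancl[OF sym_adj_rel])
    fix x assume "x \<in> A"
    then have "(x, mate i x) \<in> ?R" "(mate i x, walk_perm i j x) \<in> ?R"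
      using A_subset mate_in_V[OF _ i] adj unfolding walk_perm_def by auto
    then show "(x, walk_perm i j x) \<in> ?R\<^sup>*" by auto
  qed
  moreover have "?Q \<subseteq> A \<times> A"
    using walk_perm_in_A[OF i j] by (intro perm_edges_subset) blast
  moreover have "\<forall>a\<in>A. proj_A i a = a" unfolding proj_A_def by simp
  moreover have "\<forall>(w, u)\<in>?R. (proj_A i w, proj_A i u) \<in> ?Q\<^sup>*"
    using proj_A_adj[OF i j] by blast
  moreover have "\<forall>v\<in>V. proj_A i v \<in> A \<and> (v, proj_A i v) \<in> ?R\<^sup>*"
    using mate_in_A_iff[OF _ i] adj unfolding proj_A_def by auto
  ultimately show ?thesis
    unfolding num_components_def cycle_count_def component_eq_Image
    using card_rtrancl_classes_retract[OF sym_adj_rel _ _ A_subset] by blast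
qed

lemma faithful_faces_parity:
  "even (faithful_faces V E ends col) \<longleftrightarrow> even (card A)"
proof -
  have "faithful_faces V E ends col =
      cycle_count (walk_perm 0 1) A + cycle_count (walk_perm 1 2) A + cycle_count (walk_perm 2 0) A"
    using num_components_color_pair[of 0 1] num_components_color_pair[of 1 2]
      num_components_color_pair[of 2 0]
    unfolding faithful_faces_def by simp
  then show ?thesis
    using cycle_count_parity_of_comp_eq_id[OF finite_A walk_perm_permutes walk_perm_permutes
        walk_perm_permutes walk_perm_triangle]
    by simp
qed

end

lemma bipartite_faithful_faces_parity:
  assumes "cubic_graph V E ends" and "bipartite V E ends"
    and "proper_3_edge_coloring V E ends col" and "card V = 2 * k"
  shows "even (faithful_faces V E ends col) \<longleftrightarrow> even k"
proof -
  obtain A where "A \<subseteq> V" "\<forall>e\<in>E. card (ends e \<inter> A) = 1"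
    using assms(2) unfolding bipartite_def by blast
  with assms(1,3) interpret bipartite_edge_colored_cubic V E ends col A
    by unfold_locales
  have "k = card A" using card_V assms(4) by simp
  then show ?thesis using faithful_faces_parity by simp
qed

section \<open>Orientable maps\<close>

lemma component_subset:
  assumes "\<forall>e\<in>F. ends e \<subseteq> V" and "x \<in> V"
  shows "component ends F x \<subseteq> V"
proof
  fix z assume "z \<in> component ends F x"
  then have "(x, z) \<in> (adj_rel ends F)\<^sup>*" unfolding component_def by simp
  then show "z \<in> V"
    by (induction rule: rtrancl_induct) (use assms in \<open>auto simp: adj_rel_def\<close>)
qed

lemma card_eq_mult_num_components:
  assumes fin: "finite V" and ends: "\<forall>e\<in>F. ends e \<subseteq> V"
    and size: "\<forall>x\<in>V. card (component ends F x) = m"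
  shows "card V = m * num_components V ends F"
proof -
  let ?R = "(adj_rel ends F)\<^sup>*"
  let ?C = "component ends F ` V"
  have union: "\<Union>?C = V"
  proof
    show "\<Union>?C \<subseteq> V" using component_subset[OF ends] by blast
    show "V \<subseteq> \<Union>?C" unfolding component_def by blast
  qed
  have disjoint: "C \<inter> D = {}" if CD: "C \<in> ?C" "D \<in> ?C" and "C \<noteq> D" for C D
  proof (rule ccontr)
    assume "C \<inter> D \<noteq> {}"
    then obtain z where "z \<in> C" "z \<in> D" by blast
    obtain x y where "C = ?R `` {x}" "D = ?R `` {y}"
      using CD by (auto simp: component_eq_Image)
    moreover have "(x, z) \<in> ?R" "(y, z) \<in> ?R"
      using \<open>z \<in> C\<close> \<open>z \<in> D\<close> calculation by auto
    ultimately have "C = ?R `` {z}" "D = ?R `` {z}"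
      using rtrancl_Image_eq_if_sym[OF sym_adj_rel] by metis+
    with \<open>C \<noteq> D\<close> show False by simp
  qed
  have "m * card ?C = card (\<Union>?C)"
    by (rule card_partition) (use fin union size disjoint in auto)
  then show ?thesis unfolding num_components_def union by simp
qed

lemma perfect_matching_edge_unique:
  assumes "perfect_matching V E ends M" and "x \<in> V"
    and "e \<in> M" "e' \<in> M" "x \<in> ends e" "x \<in> ends e'"
  shows "e = e'"
proof -
  have "card {d\<in>M. x \<in> ends d} = 1"
    using assms(1,2) unfolding perfect_matching_def by blast
  then obtain d where d: "{d\<in>M. x \<in> ends d} = {d}" by (rule card_1_singletonE)
  have "e \<in> {d\<in>M. x \<in> ends d}" "e' \<in> {d\<in>M. x \<in> ends d}"
    using assms(3-) by auto
  then show ?thesis unfolding d by simp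
qed

lemma proper_3_edge_coloring_if_matchings:
  assumes colors: "\<forall>e\<in>E. col e \<in> {0,1,2}"
    and matchings: "\<forall>c\<in>{0,1,2}. perfect_matching V E ends {e\<in>E. col e = c}"
  shows "proper_3_edge_coloring V E ends col"
  unfolding proper_3_edge_coloring_def
proof (intro conjI ballI impI notI)
  fix x e e' assume "x \<in> V" "e \<in> E" "e' \<in> E"
    and at_x: "x \<in> ends e \<and> x \<in> ends e' \<and> e \<noteq> e'" and same: "col e = col e'"
  have "perfect_matching V E ends {d\<in>E. col d = col e}"
    using colors matchings \<open>e \<in> E\<close> by blast
  then have "e = e'"
    using perfect_matching_edge_unique \<open>x \<in> V\<close> \<open>e \<in> E\<close> \<open>e' \<in> E\<close> at_x same by fastforce
  with at_x show False by simp
qed (use colors in blast)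

lemma orientable_map_euler_char_even:
  assumes map: "is_map V E ends v f" and orientable: "map_orientable V E ends v f"
  shows "even (euler_char V E ends v f)"
proof -
  let ?a = "a_match E v f"
  define col where "col e = (if e \<in> v then 0 else if e \<in> f then 1 else 2::nat)" for e
  have cubic: "cubic_graph V E ends"
    and matchings: "perfect_matching V E ends v" "perfect_matching V E ends f"
      "perfect_matching V E ends ?a"
    and disjoint: "v \<inter> f = {}"
    and squares: "\<forall>x\<in>V. card (component ends (v \<union> f) x) = 4"
    using map unfolding is_map_def by auto
  have "v \<subseteq> E" "f \<subseteq> E" using matchings unfolding perfect_matching_def by auto
  then have classes: "{e\<in>E. col e = 0} = v" "{e\<in>E. col e = 1} = f" "{e\<in>E. col e = 2} = ?a"
    using disjoint unfolding col_def a_match_def by auto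
  have proper: "proper_3_edge_coloring V E ends col"
    by (rule proper_3_edge_coloring_if_matchings) (use classes matchings col_def in auto)
  have "{e\<in>E. col e \<in> {0,1}} = v \<union> f" "{e\<in>E. col e \<in> {1,2}} = f \<union> ?a"
    "{e\<in>E. col e \<in> {2,0}} = v \<union> ?a"
    using \<open>v \<subseteq> E\<close> \<open>f \<subseteq> E\<close> disjoint unfolding col_def a_match_def by auto
  then have faces: "faithful_faces V E ends col =
      num_components V ends (v \<union> f) + num_components V ends (f \<union> ?a) +
      num_components V ends (v \<union> ?a)"
    unfolding faithful_faces_def by simp
  have "card V = 2 * (2 * num_components V ends (v \<union> f))"
    using card_eq_mult_num_components[OF _ _ squares] cubic \<open>v \<subseteq> E\<close> \<open>f \<subseteq> E\<close>
    unfolding cubic_graph_def by auto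
  then have "even (faithful_faces V E ends col)"
    using bipartite_faithful_faces_parity[OF cubic _ proper] orientable
    unfolding map_orientable_def by simp
  then show ?thesis unfolding euler_char_def faces by presburger
qed

theorem theorem1p7:
  shows "(\<forall>(V :: 'v set) (E :: 'e set) ends col (k :: nat).
            cubic_graph V E ends \<and> bipartite V E ends \<and> card V = 2 * k \<and>
            proper_3_edge_coloring V E ends col
            \<longrightarrow> (even (faithful_faces V E ends col) \<longleftrightarrow> even k)) \<and>
         (\<forall>(V :: 'w set) (E :: 'f set) ends v f.
            is_map V E ends v f \<and> map_orientable V E ends v f
            \<longrightarrow> even (euler_char V E ends v f))"
  using bipartite_faithful_faces_parity orientable_map_euler_char_even by blast

end
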